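(* Let $\mathcal G$ be a simple connected graph and $\gamma\in\Gamma$. Then the orientations of the edges of $\mathcal G$ can be chosen so that $Vd\ge0$ (componentwise) for all $\varepsilon\ge0$ sufficiently small, where $d=e_1+\varepsilon\gamma$ and $V$ is the PTDF matrix for that orientation.
   Context: $\mathcal G=(\mathcal N,\mathcal E)$ has nodes $\{1,\dots,n\}$ and edges $\{1,\dots,m\}$, each with an orientation. $C\in\mathbb R^{m\times n}$ is the incidence matrix ($C_{e,i}=1$ if $e$ enters $i$, $-1$ if $e$ leaves $i$, $0$ otherwise) and the PTDF matrix is $V=C(C^TC)^+$ ($^+$ = Moore–Penrose pseudoinverse); reversing the orientation of an edge flips the sign of its row of $V$. $e_1$ is the first unit vector and $\Gamma=\{\gamma\in\mathbb R^n:\gamma_1=0,\gamma\ge0,\sum_i\gamma_i=1\}$. *)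

theory Defs
  imports "Jordan_Normal_Form.Matrix"
begin

text \<open>Nodes are 0,...,n-1 (paper's node i is index i-1; the paper's node 1 is index 0).
  An oriented graph is a list of edges (u,v), meaning the edge leaves u and enters v;
  the paper's edge k is list position k-1.\<close>

definition simple_graph :: "nat \<Rightarrow> (nat \<times> nat) list \<Rightarrow> bool" where
  "simple_graph n es \<longleftrightarrow>
     (\<forall>k<length es. fst (es!k) < n \<and> snd (es!k) < n \<and> fst (es!k) \<noteq> snd (es!k)) \<and>
     (\<forall>k<length es. \<forall>l<length es. k \<noteq> l \<longrightarrow>
        {fst (es!k), snd (es!k)} \<noteq> {fst (es!l), snd (es!l)})"

definition adjacency :: "(nat \<times> nat) list \<Rightarrow> (nat \<times> nat) set" where
  "adjacency es = set es \<union> prod.swap ` set es"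

definition connected_graph :: "nat \<Rightarrow> (nat \<times> nat) list \<Rightarrow> bool" where
  "connected_graph n es \<longleftrightarrow> (\<forall>i<n. \<forall>j<n. (i, j) \<in> (adjacency es)\<^sup>*)"

definition is_orientation_of :: "(nat \<times> nat) list \<Rightarrow> (nat \<times> nat) list \<Rightarrow> bool" where
  "is_orientation_of es' es \<longleftrightarrow> length es' = length es \<and>
     (\<forall>k<length es. es'!k = es!k \<or> es'!k = prod.swap (es!k))"

definition incidence :: "nat \<Rightarrow> (nat \<times> nat) list \<Rightarrow> real mat" where
  "incidence n es = mat (length es) n
     (\<lambda>(e, i). if snd (es!e) = i then 1 else if fst (es!e) = i then -1 else 0)"

definition pinv :: "real mat \<Rightarrow> real mat" where
  "pinv A = (THE X. X \<in> carrier_mat (dim_col A) (dim_row A) \<and>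
       A * X * A = A \<and> X * A * X = X \<and>
       transpose_mat (A * X) = A * X \<and> transpose_mat (X * A) = X * A)"

definition ptdf :: "nat \<Rightarrow> (nat \<times> nat) list \<Rightarrow> real mat" where
  "ptdf n es = (let C = incidence n es in C * pinv (transpose_mat C * C))"

definition Gamma :: "nat \<Rightarrow> real vec set" where
  "Gamma n = {\<gamma>. \<gamma> \<in> carrier_vec n \<and> \<gamma> $ 0 = 0 \<and> (\<forall>i<n. \<gamma> $ i \<ge> 0) \<and>
                 (\<Sum>i<n. \<gamma> $ i) = 1}"

end

theory Submission
  imports Defs "Jordan_Normal_Form.Determinant"
begin

(* Reversing an edge negates its row of the incidence matrix C but leaves the Laplacian
   L = C^T C, hence L^+, unchanged; so it negates exactly the corresponding row of V = C L^+.
   For d = e_1 + eps gamma the entry (V d)_e = (V e_1)_e + eps (V gamma)_e is affine in eps,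
   so orienting edge e by the sign of ((V e_1)_e, (V gamma)_e) in the lexicographic order makes
   it nonnegative for all small eps >= 0. Connectivity enters only to make L^+ an honest
   n x n matrix: with J = 1 1^T / n, the matrix L + J is invertible and L^+ = (L + J)^-1 - J. *)

definition is_pinv :: "real mat \<Rightarrow> real mat \<Rightarrow> bool" where
  "is_pinv A X \<longleftrightarrow> X \<in> carrier_mat (dim_col A) (dim_row A) \<and>
     A * X * A = A \<and> X * A * X = X \<and>
     transpose_mat (A * X) = A * X \<and> transpose_mat (X * A) = X * A"

lemma is_pinv_unique:
  assumes X: "is_pinv A X" and Y: "is_pinv A Y"
  shows "X = Y"
proof -
  define m n where "m = dim_row A" and "n = dim_col A"
  have A: "A \<in> carrier_mat m n"
    unfolding m_def n_def by (rule carrier_mat_triv)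
  from X have Xc: "X \<in> carrier_mat n m" and AXA: "A * X * A = A" and XAX: "X * A * X = X"
    and AX: "transpose_mat (A * X) = A * X" and XA: "transpose_mat (X * A) = X * A"
    unfolding is_pinv_def m_def n_def by auto
  from Y have Yc: "Y \<in> carrier_mat n m" and AYA: "A * Y * A = A" and YAY: "Y * A * Y = Y"
    and AY: "transpose_mat (A * Y) = A * Y" and YA: "transpose_mat (Y * A) = Y * A"
    unfolding is_pinv_def m_def n_def by auto
  have At: "transpose_mat A \<in> carrier_mat n m" and Xt: "transpose_mat X \<in> carrier_mat m n"
    and Yt: "transpose_mat Y \<in> carrier_mat m n"
    using A Xc Yc by simp_all
  have AXc: "A * X \<in> carrier_mat m m" and AYc: "A * Y \<in> carrier_mat m m"
    and XAc: "X * A \<in> carrier_mat n n" and YAc: "Y * A \<in> carrier_mat n n"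
    using A Xc Yc by simp_all
  \<comment> \<open>Both \<open>X\<close> and \<open>Y\<close> turn out to equal \<open>X * A * Y\<close>.\<close>
  have At_AY: "transpose_mat A = transpose_mat A * (A * Y)"
    by (metis AYA AY transpose_mult[OF AYc A])
  have XA_At: "transpose_mat A = X * A * transpose_mat A"
    by (metis AXA XA assoc_mult_mat[OF A Xc A] transpose_mult[OF A XAc])
  have "X = X * (A * X)"
    by (metis XAX assoc_mult_mat[OF Xc A Xc])
  also have "\<dots> = X * (transpose_mat X * (transpose_mat A * (A * Y)))"
    by (metis AX transpose_mult[OF A Xc] At_AY)
  also have "\<dots> = X * ((A * X) * (A * Y))"
    by (metis AX transpose_mult[OF A Xc] assoc_mult_mat[OF Xt At AYc])
  also have "\<dots> = X * A * Y"
    by (metis XAX assoc_mult_mat[OF Xc A Xc] assoc_mult_mat[OF Xc AXc AYc] assoc_mult_mat[OF Xc A Yc])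
  finally have X_eq: "X = X * A * Y" .
  have "Y = (Y * A) * Y"
    using YAY by simp
  also have "\<dots> = ((X * A) * (transpose_mat A * transpose_mat Y)) * Y"
    by (metis YA transpose_mult[OF Yc A] XA_At assoc_mult_mat[OF XAc At Yt])
  also have "\<dots> = (X * A) * (Y * A) * Y"
    by (metis YA transpose_mult[OF Yc A])
  also have "\<dots> = X * A * Y"
    by (metis YAY assoc_mult_mat[OF XAc YAc Yc] assoc_mult_mat[OF Yc A Yc])
  finally show ?thesis
    using X_eq by simp
qed

lemma pinv_eqI:
  assumes "is_pinv A X"
  shows "pinv A = X"
proof -
  have "(THE X. is_pinv A X) = X"
    using assms is_pinv_unique by (intro the_equality)
  then show ?thesis
    by (simp add: pinv_def is_pinv_def)
qed

lemma minus_zero_mat [simp]: "(A :: 'a :: group_add mat) \<in> carrier_mat nr nc \<Longrightarrow> A - 0\<^sub>m nr nc = A"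
  by (intro eq_matI) auto

lemma add_eq_imp_eq_minus_mat:
  fixes A B C :: "'a :: group_add mat"
  assumes "A \<in> carrier_mat nr nc" "B \<in> carrier_mat nr nc" "A + B = C"
  shows "A = C - B"
proof -
  have "C - B = A + B - B"
    using assms(3) by simp
  also have "\<dots> = A"
    using assms(1,2) by (intro eq_matI) auto
  finally show ?thesis
    by simp
qed

lemma is_pinv_shifted_inverse:
  fixes L J B :: "real mat"
  assumes L: "L \<in> carrier_mat n n" and J: "J \<in> carrier_mat n n" and B: "B \<in> carrier_mat n n"
    and J_sym: "transpose_mat J = J" and J_idem: "J * J = J"
    and LJ: "L * J = 0\<^sub>m n n" and JL: "J * L = 0\<^sub>m n n"
    and B_left: "B * (L + J) = 1\<^sub>m n" and B_right: "(L + J) * B = 1\<^sub>m n"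
  shows "is_pinv L (B - J)"
proof -
  note carriers = L J B
  have "B * J = B * ((L + J) * J)"
    using LJ J_idem carriers by (simp add: add_mult_distrib_mat[of L n n J J n])
  also have "\<dots> = J"
    using B_left carriers by (simp add: assoc_mult_mat[of B n n "L + J" n J n, symmetric])
  finally have BJ: "B * J = J" .
  have "J * B = (J * (L + J)) * B"
    using JL J_idem carriers by (simp add: mult_add_distrib_mat[of J n n L n J])
  also have "\<dots> = J"
    using B_right carriers by (simp add: assoc_mult_mat[of J n n "L + J" n B n])
  finally have JB: "J * B = J" .
  have "L * B + J = 1\<^sub>m n"
    using B_right JB carriers by (simp add: add_mult_distrib_mat[of L n n J B n])
  then have LB: "L * B = 1\<^sub>m n - J"
    using carriers by (intro add_eq_imp_eq_minus_mat) auto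
  have "B * L + J = 1\<^sub>m n"
    using B_left BJ carriers by (simp add: mult_add_distrib_mat[of B n n L n J])
  then have BL: "B * L = 1\<^sub>m n - J"
    using carriers by (intro add_eq_imp_eq_minus_mat) auto
  have L_X: "L * (B - J) = 1\<^sub>m n - J"
    using LB LJ carriers by (simp add: mult_minus_distrib_mat[of L n n B n J] minus_carrier_mat)
  have X_L: "(B - J) * L = 1\<^sub>m n - J"
    using BL JL carriers by (simp add: minus_mult_distrib_mat[of B n n J L n] minus_carrier_mat)
  have P_sym: "transpose_mat (1\<^sub>m n - J) = 1\<^sub>m n - J"
    using J_sym carriers by (simp add: transpose_minus[of "1\<^sub>m n" n n J])
  have "L * (B - J) * L = L - J * L"
    using L_X carriers by (simp add: minus_mult_distrib_mat[of "1\<^sub>m n" n n J L n])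
  also have "\<dots> = L"
    using JL carriers by simp
  finally have pinv1: "L * (B - J) * L = L" .
  have "(B - J) * L * (B - J) = (B - J) - J * (B - J)"
    using X_L carriers by (simp add: minus_mult_distrib_mat[of "1\<^sub>m n" n n J "B - J" n] minus_carrier_mat)
  also have "J * (B - J) = 0\<^sub>m n n"
    using JB J_idem carriers by (simp add: mult_minus_distrib_mat[of J n n B n J])
  also have "B - J - 0\<^sub>m n n = B - J"
    using carriers by (simp add: minus_carrier_mat)
  finally have pinv2: "(B - J) * L * (B - J) = B - J" .
  have "B - J \<in> carrier_mat (dim_col L) (dim_row L)"
    using carriers by (simp add: minus_carrier_mat)
  moreover have "transpose_mat (L * (B - J)) = L * (B - J)"
    unfolding L_X by (rule P_sym)
  moreover have "transpose_mat ((B - J) * L) = (B - J) * L"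
    unfolding X_L by (rule P_sym)
  ultimately show ?thesis
    using pinv1 pinv2 by (simp only: is_pinv_def)
qed

definition loopless :: "nat \<Rightarrow> (nat \<times> nat) list \<Rightarrow> bool" where
  "loopless n es \<longleftrightarrow>
     (\<forall>k<length es. fst (es!k) < n \<and> snd (es!k) < n \<and> fst (es!k) \<noteq> snd (es!k))"

lemma simple_graph_imp_loopless: "simple_graph n es \<Longrightarrow> loopless n es"
  unfolding simple_graph_def loopless_def by blast

lemma loopless_nth:
  "loopless n es \<Longrightarrow> e < length es \<Longrightarrow> fst (es!e) < n \<and> snd (es!e) < n \<and> fst (es!e) \<noteq> snd (es!e)"
  unfolding loopless_def by blast

lemma incidence_carrier [simp]: "incidence n es \<in> carrier_mat (length es) n"
  by (simp add: incidence_def)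

lemma incidence_dim [simp]:
  "dim_row (incidence n es) = length es" "dim_col (incidence n es) = n"
  by (simp_all add: incidence_def)

lemma incidence_index:
  "e < length es \<Longrightarrow> i < n \<Longrightarrow> incidence n es $$ (e, i) =
     (if snd (es!e) = i then 1 else if fst (es!e) = i then -1 else 0)"
  by (simp add: incidence_def)

lemma incidence_mult_vec:
  assumes "loopless n es" and e: "e < length es" and v: "v \<in> carrier_vec n"
  shows "(incidence n es *\<^sub>v v) $ e = v $ snd (es!e) - v $ fst (es!e)"
proof -
  obtain a b where ab: "es!e = (a, b)" by force
  have a_b: "a < n" "b < n" "a \<noteq> b"
    using loopless_nth[OF assms(1) e] ab by auto
  have "(incidence n es *\<^sub>v v) $ e = (\<Sum>i<n. incidence n es $$ (e, i) * v $ i)"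
    using e v by (simp add: scalar_prod_def lessThan_atLeast0)
  also have "\<dots> = (\<Sum>i<n. (if i = b then v $ i else 0) - (if i = a then v $ i else 0))"
    using a_b by (intro sum.cong) (auto simp: incidence_index[OF e] ab)
  also have "\<dots> = v $ b - v $ a"
    using a_b by (simp add: sum_subtractf)
  finally show ?thesis
    using ab by simp
qed

definition laplacian :: "nat \<Rightarrow> (nat \<times> nat) list \<Rightarrow> real mat" where
  "laplacian n es = transpose_mat (incidence n es) * incidence n es"

lemma laplacian_dim [simp]: "dim_row (laplacian n es) = n" "dim_col (laplacian n es) = n"
  by (simp_all add: laplacian_def)

lemma laplacian_carrier [simp]: "laplacian n es \<in> carrier_mat n n"
  by (rule carrier_matI) simp_all

lemma ptdf_eq: "ptdf n es = incidence n es * pinv (laplacian n es)"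
  by (simp add: ptdf_def laplacian_def Let_def)

lemma laplacian_mult_vec:
  "v \<in> carrier_vec n \<Longrightarrow> laplacian n es *\<^sub>v v = transpose_mat (incidence n es) *\<^sub>v (incidence n es *\<^sub>v v)"
  unfolding laplacian_def by (rule assoc_mult_mat_vec[of _ n "length es" _ n]) simp_all

lemma laplacian_sym: "transpose_mat (laplacian n es) = laplacian n es"
  unfolding laplacian_def
  by (simp add: transpose_mult[of "transpose_mat (incidence n es)" n "length es" "incidence n es" n])

lemma laplacian_mult_ones:
  assumes "loopless n es"
  shows "laplacian n es *\<^sub>v vec n (\<lambda>_. 1) = 0\<^sub>v n"
proof -
  have "(incidence n es *\<^sub>v vec n (\<lambda>_. 1)) $ e = 0" if "e < length es" for e
    using loopless_nth[OF assms that] by (subst incidence_mult_vec[OF assms that]) auto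
  then have "incidence n es *\<^sub>v vec n (\<lambda>_. 1) = 0\<^sub>v (length es)"
    by (intro eq_vecI) auto
  then have "laplacian n es *\<^sub>v vec n (\<lambda>_. 1) = transpose_mat (incidence n es) *\<^sub>v 0\<^sub>v (length es)"
    by (simp add: laplacian_mult_vec)
  also have "\<dots> = 0\<^sub>v n"
    by (intro eq_vecI) auto
  finally show ?thesis .
qed

text \<open>\<open>v\<^sup>T L v\<close> is the sum of the squared potential differences along the edges.\<close>
lemma laplacian_kernel_edge:
  assumes loopless: "loopless n es" and v: "v \<in> carrier_vec n"
    and Lv: "laplacian n es *\<^sub>v v = 0\<^sub>v n" and edge: "(i, j) \<in> adjacency es"
  shows "v $ i = v $ j"
proof -
  define w where "w = incidence n es *\<^sub>v v"
  have w: "w \<in> carrier_vec (length es)"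
    unfolding w_def using incidence_carrier v by (rule mult_mat_vec_carrier)
  have "w \<bullet> w = (transpose_mat (incidence n es) *\<^sub>v w) \<bullet> v"
    using transpose_vec_mult_scalar[OF incidence_carrier v w] by (simp add: w_def)
  also have "\<dots> = 0"
    using Lv v by (simp add: laplacian_mult_vec w_def)
  finally have "(\<Sum>k<length es. w $ k * w $ k) = 0"
    using w by (simp add: scalar_prod_def lessThan_atLeast0)
  then have w0: "w $ k = 0" if "k < length es" for k
    using that by (subst (asm) sum_nonneg_eq_0_iff) auto
  have "(i, j) \<in> set es \<or> (j, i) \<in> set es"
    using edge by (auto simp: adjacency_def)
  then obtain k where k: "k < length es" and ij: "es!k = (i, j) \<or> es!k = (j, i)"
    by (metis in_set_conv_nth)
  have "v $ snd (es!k) = v $ fst (es!k)"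
    using w0[OF k] incidence_mult_vec[OF loopless k v] by (simp add: w_def)
  then show ?thesis
    using ij by auto
qed

lemma laplacian_kernel_const:
  assumes loopless: "loopless n es" and conn: "connected_graph n es" and v: "v \<in> carrier_vec n"
    and Lv: "laplacian n es *\<^sub>v v = 0\<^sub>v n" and i: "i < n" and j: "j < n"
  shows "v $ i = v $ j"
proof -
  have "(i, j) \<in> (adjacency es)\<^sup>*"
    using conn i j by (simp add: connected_graph_def)
  then show ?thesis
  proof (induction rule: rtrancl_induct)
    case (step k l)
    then show ?case
      using laplacian_kernel_edge[OF loopless v Lv, of k l] by simp
  qed simp
qed

definition averaging_mat :: "nat \<Rightarrow> real mat" where
  "averaging_mat n = mat n n (\<lambda>_. 1 / real n)"

lemma averaging_mat_dim [simp]: "dim_row (averaging_mat n) = n" "dim_col (averaging_mat n) = n"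
  by (simp_all add: averaging_mat_def)

lemma averaging_mat_carrier [simp]: "averaging_mat n \<in> carrier_mat n n"
  by (rule carrier_matI) simp_all

lemma averaging_mat_sym: "transpose_mat (averaging_mat n) = averaging_mat n"
  by (intro eq_matI) (auto simp: averaging_mat_def)

lemma averaging_mat_mult_vec:
  "v \<in> carrier_vec n \<Longrightarrow> i < n \<Longrightarrow> (averaging_mat n *\<^sub>v v) $ i = (\<Sum>k<n. v $ k) / real n"
  by (simp add: averaging_mat_def scalar_prod_def lessThan_atLeast0 sum_divide_distrib)

lemma averaging_mat_idem:
  assumes "n > 0"
  shows "averaging_mat n * averaging_mat n = averaging_mat n"
  using assms by (intro eq_matI) (auto simp: averaging_mat_def scalar_prod_def power2_eq_square)

lemma mult_averaging_mat:
  fixes A :: "real mat"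
  assumes A: "A \<in> carrier_mat m n" and A1: "A *\<^sub>v vec n (\<lambda>_. 1) = 0\<^sub>v m"
  shows "A * averaging_mat n = 0\<^sub>m m n"
proof (rule eq_matI)
  fix i j assume "i < dim_row (0\<^sub>m m n :: real mat)" "j < dim_col (0\<^sub>m m n :: real mat)"
  then have i: "i < m" and j: "j < n" by auto
  have "(A * averaging_mat n) $$ (i, j) = (A *\<^sub>v vec n (\<lambda>_. 1)) $ i / real n"
    using A i j by (simp add: averaging_mat_def scalar_prod_def sum_divide_distrib)
  then show "(A * averaging_mat n) $$ (i, j) = 0\<^sub>m m n $$ (i, j)"
    using A1 i j by simp
qed (use A in auto)

lemma laplacian_mult_averaging:
  "loopless n es \<Longrightarrow> laplacian n es * averaging_mat n = 0\<^sub>m n n"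
  by (rule mult_averaging_mat[OF laplacian_carrier laplacian_mult_ones])

lemma averaging_mult_laplacian:
  assumes "loopless n es"
  shows "averaging_mat n * laplacian n es = 0\<^sub>m n n"
proof -
  have "averaging_mat n * laplacian n es = transpose_mat (laplacian n es * averaging_mat n)"
    by (simp add: transpose_mult[OF laplacian_carrier averaging_mat_carrier]
        laplacian_sym averaging_mat_sym)
  then show ?thesis
    by (simp add: laplacian_mult_averaging[OF assms])
qed

lemma laplacian_plus_averaging_kernel:
  assumes loopless: "loopless n es" and conn: "connected_graph n es" and n: "n > 0"
    and v: "v \<in> carrier_vec n" and LJv: "(laplacian n es + averaging_mat n) *\<^sub>v v = 0\<^sub>v n"
  shows "v = 0\<^sub>v n"
proof -
  define L J where "L = laplacian n es" and "J = averaging_mat n"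
  have L: "L \<in> carrier_mat n n" and J: "J \<in> carrier_mat n n"
    by (simp_all add: L_def J_def)
  have JL: "J * L = 0\<^sub>m n n" and JJ: "J * J = J" and LJv': "(L + J) *\<^sub>v v = 0\<^sub>v n"
    using averaging_mult_laplacian[OF loopless] averaging_mat_idem[OF n] LJv by (simp_all add: L_def J_def)
  have "J *\<^sub>v v = (J * (L + J)) *\<^sub>v v"
    using L J JL JJ by (simp add: mult_add_distrib_mat[OF J L J])
  also have "\<dots> = J *\<^sub>v ((L + J) *\<^sub>v v)"
    using L J v by (simp add: assoc_mult_mat_vec[of J n n "L + J" n v])
  also have "\<dots> = 0\<^sub>v n"
    using J LJv' by (intro eq_vecI) auto
  finally have Jv: "J *\<^sub>v v = 0\<^sub>v n" .
  then have Lv: "L *\<^sub>v v = 0\<^sub>v n"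
    using LJv' L J v by (simp add: add_mult_distrib_mat_vec[of L n n J v])
  define c where "c = v $ 0"
  have const: "v $ i = c" if "i < n" for i
    using laplacian_kernel_const[OF loopless conn v _ that n] Lv by (simp add: c_def L_def)
  have "(J *\<^sub>v v) $ 0 = (\<Sum>k<n. v $ k) / real n"
    unfolding J_def using v n by (rule averaging_mat_mult_vec)
  also have "\<dots> = c"
    using n const by simp
  finally have "c = 0"
    using Jv n by simp
  then show ?thesis
    using v const by (intro eq_vecI) auto
qed

lemma laplacian_plus_averaging_invertible:
  assumes "loopless n es" and "connected_graph n es" and "n > 0"
  obtains B where "B \<in> carrier_mat n n"
    and "B * (laplacian n es + averaging_mat n) = 1\<^sub>m n"
    and "(laplacian n es + averaging_mat n) * B = 1\<^sub>m n"
proof -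
  have LJ: "laplacian n es + averaging_mat n \<in> carrier_mat n n"
    by simp
  have "det (laplacian n es + averaging_mat n) \<noteq> 0"
    using det_0_iff_vec_prod_zero_field[OF LJ] laplacian_plus_averaging_kernel[OF assms] by auto
  from det_non_zero_imp_unit[OF LJ this, of "()"]
  show ?thesis
    using that unfolding Units_def ring_mat_def by auto
qed

text \<open>Since \<open>pinv\<close> is a definite description, not even its dimensions are known until a
  Penrose inverse is exhibited.\<close>
lemma pinv_laplacian_carrier:
  assumes loopless: "loopless n es" and conn: "connected_graph n es" and n: "n > 0"
  shows "pinv (laplacian n es) \<in> carrier_mat n n"
proof -
  obtain B where B: "B \<in> carrier_mat n n"
    and "B * (laplacian n es + averaging_mat n) = 1\<^sub>m n"
    and "(laplacian n es + averaging_mat n) * B = 1\<^sub>m n"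
    using laplacian_plus_averaging_invertible[OF assms] .
  then have "is_pinv (laplacian n es) (B - averaging_mat n)"
    by (intro is_pinv_shifted_inverse[of _ n])
      (simp_all add: averaging_mat_sym averaging_mat_idem[OF n]
        laplacian_mult_averaging[OF loopless] averaging_mult_laplacian[OF loopless])
  then show ?thesis
    using B by (simp add: pinv_eqI minus_carrier_mat)
qed

definition reorient :: "(nat \<Rightarrow> bool) \<Rightarrow> (nat \<times> nat) list \<Rightarrow> (nat \<times> nat) list" where
  "reorient flip es = map (\<lambda>e. if flip e then prod.swap (es!e) else es!e) [0..<length es]"

lemma length_reorient [simp]: "length (reorient flip es) = length es"
  by (simp add: reorient_def)

lemma nth_reorient [simp]:
  "e < length es \<Longrightarrow> reorient flip es ! e = (if flip e then prod.swap (es!e) else es!e)"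
  by (simp add: reorient_def)

lemma reorient_is_orientation: "is_orientation_of (reorient flip es) es"
  by (simp add: is_orientation_of_def)

lemma incidence_reorient:
  assumes "loopless n es" and e: "e < length es" and i: "i < n"
  shows "incidence n (reorient flip es) $$ (e, i) = (if flip e then -1 else 1) * incidence n es $$ (e, i)"
proof -
  obtain u v where uv: "es!e = (u, v)"
    by force
  have "u \<noteq> v"
    using loopless_nth[OF assms(1) e] uv by simp
  then show ?thesis
    using e i by (cases "flip e") (simp_all add: incidence_index uv)
qed

lemma laplacian_reorient:
  assumes "loopless n es"
  shows "laplacian n (reorient flip es) = laplacian n es"
proof (rule eq_matI)
  fix i j assume "i < dim_row (laplacian n es)" "j < dim_col (laplacian n es)"
  then have i: "i < n" and j: "j < n" by simp_all
  have entry: "laplacian n F $$ (i, j) =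
      (\<Sum>e<length F. incidence n F $$ (e, i) * incidence n F $$ (e, j))" for F
    using i j by (simp add: laplacian_def scalar_prod_def lessThan_atLeast0)
  have "(\<Sum>e<length es. incidence n (reorient flip es) $$ (e, i) * incidence n (reorient flip es) $$ (e, j))
      = (\<Sum>e<length es. incidence n es $$ (e, i) * incidence n es $$ (e, j))"
    using i j by (intro sum.cong refl) (simp add: incidence_reorient[OF assms])
  then show "laplacian n (reorient flip es) $$ (i, j) = laplacian n es $$ (i, j)"
    by (simp only: entry length_reorient)
qed simp_all

lemma ptdf_reorient_mult_vec:
  assumes loopless: "loopless n es" and P: "pinv (laplacian n es) \<in> carrier_mat n n"
    and d: "d \<in> carrier_vec n" and e: "e < length es"
  shows "(ptdf n (reorient flip es) *\<^sub>v d) $ e = (if flip e then -1 else 1) * (ptdf n es *\<^sub>v d) $ e"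
proof -
  define w where "w = pinv (laplacian n es) *\<^sub>v d"
  have w: "w \<in> carrier_vec n"
    using P d by (simp add: w_def)
  have row_sum: "(ptdf n F *\<^sub>v d) $ e = (\<Sum>i<n. incidence n F $$ (e, i) * w $ i)"
    if "length F = length es" "laplacian n F = laplacian n es" for F
  proof -
    have "incidence n F \<in> carrier_mat (length es) n"
      using incidence_carrier[of n F] that(1) by simp
    then have "ptdf n F *\<^sub>v d = incidence n F *\<^sub>v w"
      using that(2) P d by (simp add: ptdf_eq w_def)
    then show ?thesis
      using that e w by (simp add: scalar_prod_def lessThan_atLeast0)
  qed
  have "(\<Sum>i<n. incidence n (reorient flip es) $$ (e, i) * w $ i) =
      (if flip e then -1 else 1) * (\<Sum>i<n. incidence n es $$ (e, i) * w $ i)"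
    by (simp add: incidence_reorient[OF loopless e] sum_distrib_left mult.assoc)
  then show ?thesis
    by (simp only: row_sum[OF length_reorient laplacian_reorient[OF loopless]] row_sum[OF refl refl])
qed

definition lex_sign :: "real \<Rightarrow> real \<Rightarrow> real" where
  "lex_sign a b = (if 0 < a \<or> a = 0 \<and> 0 \<le> b then 1 else -1)"

lemma lex_sign_affine_eventually_nonneg:
  "\<forall>\<^sub>F \<epsilon> in at_right 0. 0 \<le> lex_sign a b * (a + \<epsilon> * b)"
proof (cases "a = 0")
  case True
  have "0 \<le> lex_sign a b * (a + \<epsilon> * b)" if "0 < \<epsilon>" for \<epsilon>
    using True that by (simp add: lex_sign_def mult_nonneg_nonpos)
  then show ?thesis
    using eventually_at_right_less[of "0 :: real"] by (auto elim: eventually_mono)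
next
  case False
  have "((\<lambda>\<epsilon>. lex_sign a b * (a + \<epsilon> * b)) \<longlongrightarrow> lex_sign a b * (a + 0 * b)) (at_right 0)"
    by (intro tendsto_intros)
  moreover have "lex_sign a b * (a + 0 * b) > 0"
    using False by (auto simp: lex_sign_def)
  ultimately have "\<forall>\<^sub>F \<epsilon> in at_right 0. 0 < lex_sign a b * (a + \<epsilon> * b)"
    by (rule order_tendstoD(1))
  then show ?thesis
    by (rule eventually_mono) simp
qed

lemma lex_sign_affine_nonneg_near_zero:
  assumes "finite K"
  obtains \<epsilon>0 :: real where "\<epsilon>0 > 0"
    and "\<And>\<epsilon> k. 0 \<le> \<epsilon> \<Longrightarrow> \<epsilon> \<le> \<epsilon>0 \<Longrightarrow> k \<in> K \<Longrightarrow> 0 \<le> lex_sign (a k) (b k) * (a k + \<epsilon> * b k)"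
proof -
  have "\<forall>\<^sub>F \<epsilon> in at_right 0. \<forall>k\<in>K. 0 \<le> lex_sign (a k) (b k) * (a k + \<epsilon> * b k)"
    using assms lex_sign_affine_eventually_nonneg by (intro eventually_ball_finite) auto
  then obtain \<delta> :: real where "\<delta> > 0"
    and \<delta>: "\<And>\<epsilon> k. 0 < \<epsilon> \<Longrightarrow> \<epsilon> < \<delta> \<Longrightarrow> k \<in> K \<Longrightarrow> 0 \<le> lex_sign (a k) (b k) * (a k + \<epsilon> * b k)"
    by (auto simp: eventually_at_right_field)
  have at_zero: "0 \<le> lex_sign (a k) (b k) * a k" for k
    by (simp add: lex_sign_def)
  show ?thesis
  proof (rule that[of "\<delta> / 2"])
    fix \<epsilon> k assume "0 \<le> \<epsilon>" "\<epsilon> \<le> \<delta> / 2" "k \<in> K"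
    then show "0 \<le> lex_sign (a k) (b k) * (a k + \<epsilon> * b k)"
      using \<delta> \<open>\<delta> > 0\<close> at_zero by (cases "\<epsilon> = 0") auto
  qed (use \<open>\<delta> > 0\<close> in simp)
qed

theorem mainTheorem2:
  fixes n :: nat and es :: "(nat \<times> nat) list" and \<gamma> :: "real vec"
  assumes "simple_graph n es"
    and "connected_graph n es"
    and "\<gamma> \<in> Gamma n"
  shows "\<exists>es'. is_orientation_of es' es \<and>
           (\<exists>\<epsilon>0 > 0. \<forall>\<epsilon>::real. 0 \<le> \<epsilon> \<and> \<epsilon> \<le> \<epsilon>0 \<longrightarrow>
              (\<forall>e<length es'.
                 (ptdf n es' *\<^sub>v (unit_vec n 0 + \<epsilon> \<cdot>\<^sub>v \<gamma>)) $ e \<ge> 0))"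
proof -
  have loopless: "loopless n es"
    using assms(1) by (rule simple_graph_imp_loopless)
  have \<gamma>: "\<gamma> \<in> carrier_vec n" and n: "n > 0"
    using assms(3) by (auto simp: Gamma_def intro: Nat.gr0I)
  have P: "pinv (laplacian n es) \<in> carrier_mat n n"
    using pinv_laplacian_carrier[OF loopless assms(2) n] .
  define a b where "a e = (ptdf n es *\<^sub>v unit_vec n 0) $ e"
    and "b e = (ptdf n es *\<^sub>v \<gamma>) $ e" for e
  define es' where "es' = reorient (\<lambda>e. lex_sign (a e) (b e) < 0) es"
  have V: "ptdf n es \<in> carrier_mat (length es) n"
    using mult_carrier_mat[OF incidence_carrier P] by (simp add: ptdf_eq)
  have entry: "(ptdf n es' *\<^sub>v (unit_vec n 0 + \<epsilon> \<cdot>\<^sub>v \<gamma>)) $ e = lex_sign (a e) (b e) * (a e + \<epsilon> * b e)"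
    if "e < length es" for \<epsilon> e
    using that V \<gamma>
    by (simp add: es'_def ptdf_reorient_mult_vec[OF loopless P] mult_add_distrib_mat_vec[OF V]
        mult_mat_vec[OF V] a_def b_def) (simp add: lex_sign_def)
  obtain \<epsilon>0 :: real where "\<epsilon>0 > 0" and "\<And>\<epsilon> e. 0 \<le> \<epsilon> \<Longrightarrow> \<epsilon> \<le> \<epsilon>0 \<Longrightarrow> e \<in> {..<length es} \<Longrightarrow>
      0 \<le> lex_sign (a e) (b e) * (a e + \<epsilon> * b e)"
    using lex_sign_affine_nonneg_near_zero[of "{..<length es}"] by blast
  then show ?thesis
    using entry by (intro exI[of _ es'] conjI exI[of _ \<epsilon>0]) (auto simp: es'_def reorient_is_orientation)
qed

end
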